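(* For every $\mathcal{ALC}$-formula $\varphi$, $\varphi\equiv\varphi^\dagger$, where $$\varphi^\dagger=\bigvee_{(T,o,f)\in\mathrm{QM}(\varphi)}\Big(\bigwedge_{\alpha\in f}\alpha\ \wedge\bigwedge_{\neg\alpha\in f}\neg\alpha\Big),$$ with $\alpha$ ranging over atomic formulae (of the form $(C=\top)$, $C(a)$, $r(a,b)$).
   Context: $\mathcal{ALC}$ concepts: $C::=A\mid\neg C\mid(C\sqcap C)\mid\exists r.C$ ($A$ concept name, $r$ role name). $\mathcal{ALC}$-formulae: $\phi::=\alpha\mid\neg\phi\mid(\phi\wedge\phi)$, atomic $\alpha::=C(a)\mid r(a,b)\mid(C=\top)$ ($a,b$ individual names); $\neg\neg\psi$ is identified with $\psi$; an empty disjunction is $\bot$. Interpretations $I=(\Delta^I,\cdot^I)$ with countable nonempty domain and standard semantics ($I\models(C=\top)$ iff $C^I=\Delta^I$, etc.); $\varphi\equiv\psi$ means both have the same models. $\mathrm{Sub}(\alpha)=\mathrm{Sub}(\neg\alpha)=\{\alpha,\neg\alpha\}$ for atomic $\alpha$; $\mathrm{Sub}(\psi\wedge\psi')=\mathrm{Sub}(\neg(\psi\wedge\psi'))=\{\psi\wedge\psi',\neg(\psi\wedge\psi')\}\cup\mathrm{Sub}(\psi)\cup\mathrm{Sub}(\psi')$. $\mathrm{con}(\varphi)$ is the smallest set of concepts containing $C$ whenever $(C=\top)\in\mathrm{Sub}(\varphi)$ or $C(a)\in\mathrm{Sub}(\varphi)$, containing $C,D$ when it contains $C\sqcap D$, containing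 $C$ when it contains $\exists r.C$, and closed under single negation. $\mathrm{ind}(\varphi)$: individual names in $\varphi$. Concept type for $\varphi$: $c\subseteq\mathrm{con}(\varphi)$ with $D\in c$ iff $\neg D\notin c$ ($D\in\mathrm{con}(\varphi)$) and $D\sqcap E\in c$ iff $\{D,E\}\subseteq c$ ($D\sqcap E\in\mathrm{con}(\varphi)$). Formula type for $\varphi$: $f\subseteq\mathrm{Sub}(\varphi)$ with $\psi\in f$ iff $\neg\psi\notin f$ ($\psi\in\mathrm{Sub}(\varphi)$) and $\psi\wedge\psi'\in f$ iff $\{\psi,\psi'\}\subseteq f$. Model candidate: $(T,o,f)$, $T$ a set of concept types, $o:\mathrm{ind}(\varphi)\to T$, $f$ a formula type, with $\varphi\in f$; $C(a)\in f\Rightarrow C\in o(a)$; $r(a,b)\in f\Rightarrow\{\neg C\mid\neg\exists r.C\in o(a)\}\subseteq o(b)$. Quasimodel for $\varphi$: a model candidate such that for every $c\in T$ and $\exists r.D\in c$ some $c'\in T$ contains $\{D\}\cup\{\neg E\mid\neg\exists r.E\in c\}$; for every $c\in T$ and concept $C$, $\neg C\in c$ implies $(C=\top)\notin f$; for every concept $C$, $\neg(C=\top)\in f$ implies some $c\in T$ has $C\notin c$; $T\neq\emptyset$. $\mathrm{QM}(\varphi)$ is the set of all quasimodels for $\varphi$. *)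

theory Defs
  imports Main "HOL-Library.Countable_Set"
begin

type_synonym cname = nat
type_synonym rname = nat
type_synonym iname = nat

datatype concept =
    CName cname
  | CNot concept
  | CAnd concept concept
  | CEx rname concept

datatype formula =
    CAss concept iname
  | RAss rname iname iname
  | CTop concept
  | FNot formula
  | FAnd formula formula

fun atomic :: "formula \<Rightarrow> bool" where
  "atomic (CAss C a) = True"
| "atomic (RAss r a b) = True"
| "atomic (CTop C) = True"
| "atomic _ = False"

record 'd interp =
  dom :: "'d set"
  cint :: "cname \<Rightarrow> 'd set"
  rint :: "rname \<Rightarrow> ('d \<times> 'd) set"
  iint :: "iname \<Rightarrow> 'd"

definition wf_interp :: "'d interp \<Rightarrow> bool" where
  "wf_interp I \<longleftrightarrow> dom I \<noteq> {} \<and> countable (dom I)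
     \<and> (\<forall>A. cint I A \<subseteq> dom I) \<and> (\<forall>r. rint I r \<subseteq> dom I \<times> dom I)
     \<and> (\<forall>a. iint I a \<in> dom I)"

fun cext :: "'d interp \<Rightarrow> concept \<Rightarrow> 'd set" where
  "cext I (CName A) = cint I A"
| "cext I (CNot C) = dom I - cext I C"
| "cext I (CAnd C D) = cext I C \<inter> cext I D"
| "cext I (CEx r C) = {x \<in> dom I. \<exists>y. (x, y) \<in> rint I r \<and> y \<in> cext I C}"

fun sat :: "'d interp \<Rightarrow> formula \<Rightarrow> bool" where
  "sat I (CAss C a) = (iint I a \<in> cext I C)"
| "sat I (RAss r a b) = ((iint I a, iint I b) \<in> rint I r)"
| "sat I (CTop C) = (cext I C = dom I)"
| "sat I (FNot \<phi>) = (\<not> sat I \<phi>)"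
| "sat I (FAnd \<phi> \<psi>) = (sat I \<phi> \<and> sat I \<psi>)"

fun fneg :: "formula \<Rightarrow> formula" where
  "fneg (FNot \<psi>) = \<psi>"
| "fneg \<psi> = FNot \<psi>"

fun cneg :: "concept \<Rightarrow> concept" where
  "cneg (CNot C) = C"
| "cneg C = CNot C"

text \<open>Normal form of a formula: double negations removed
 (realises the identification of \<open>\<not>\<not>\<psi>\<close> with \<open>\<psi>\<close>).\<close>
fun fnf :: "formula \<Rightarrow> formula" where
  "fnf (FNot \<psi>) = fneg (fnf \<psi>)"
| "fnf (FAnd \<psi> \<chi>) = FAnd (fnf \<psi>) (fnf \<chi>)"
| "fnf \<psi> = \<psi>"

fun Sub0 :: "formula \<Rightarrow> formula set" where
  "Sub0 (FNot \<psi>) = Sub0 \<psi>"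
| "Sub0 (FAnd \<psi> \<chi>) = {FAnd \<psi> \<chi>, FNot (FAnd \<psi> \<chi>)} \<union> Sub0 \<psi> \<union> Sub0 \<chi>"
| "Sub0 \<alpha> = {\<alpha>, FNot \<alpha>}"

definition Sub :: "formula \<Rightarrow> formula set" where
  "Sub \<phi> = Sub0 (fnf \<phi>)"

inductive_set con :: "formula \<Rightarrow> concept set" for \<phi> :: formula where
  con_top: "CTop C \<in> Sub \<phi> \<Longrightarrow> C \<in> con \<phi>"
| con_ass: "CAss C a \<in> Sub \<phi> \<Longrightarrow> C \<in> con \<phi>"
| con_and1: "CAnd C D \<in> con \<phi> \<Longrightarrow> C \<in> con \<phi>"
| con_and2: "CAnd C D \<in> con \<phi> \<Longrightarrow> D \<in> con \<phi>"
| con_ex: "CEx r C \<in> con \<phi> \<Longrightarrow> C \<in> con \<phi>"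
| con_neg: "C \<in> con \<phi> \<Longrightarrow> cneg C \<in> con \<phi>"

fun ind :: "formula \<Rightarrow> iname set" where
  "ind (CAss C a) = {a}"
| "ind (RAss r a b) = {a, b}"
| "ind (CTop C) = {}"
| "ind (FNot \<psi>) = ind \<psi>"
| "ind (FAnd \<psi> \<chi>) = ind \<psi> \<union> ind \<chi>"

definition concept_type :: "formula \<Rightarrow> concept set \<Rightarrow> bool" where
  "concept_type \<phi> c \<longleftrightarrow> c \<subseteq> con \<phi>
     \<and> (\<forall>D \<in> con \<phi>. D \<in> c \<longleftrightarrow> cneg D \<notin> c)
     \<and> (\<forall>D E. CAnd D E \<in> con \<phi> \<longrightarrow> (CAnd D E \<in> c \<longleftrightarrow> D \<in> c \<and> E \<in> c))"

definition formula_type :: "formula \<Rightarrow> formula set \<Rightarrow> bool" where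
  "formula_type \<phi> f \<longleftrightarrow> f \<subseteq> Sub \<phi>
     \<and> (\<forall>\<psi> \<in> Sub \<phi>. \<psi> \<in> f \<longleftrightarrow> fneg \<psi> \<notin> f)
     \<and> (\<forall>\<psi> \<chi>. FAnd \<psi> \<chi> \<in> Sub \<phi> \<longrightarrow> (FAnd \<psi> \<chi> \<in> f \<longleftrightarrow> \<psi> \<in> f \<and> \<chi> \<in> f))"

text \<open>The map \<open>o\<close> is defined on \<open>ind \<phi>\<close> only;
 we represent it as a total function that is \<open>{}\<close> outside \<open>ind \<phi>\<close>.\<close>
definition model_candidate ::
  "formula \<Rightarrow> concept set set \<Rightarrow> (iname \<Rightarrow> concept set) \<Rightarrow> formula set \<Rightarrow> bool" where
  "model_candidate \<phi> T ob f \<longleftrightarrow>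
     (\<forall>c \<in> T. concept_type \<phi> c)
     \<and> (\<forall>a \<in> ind \<phi>. ob a \<in> T) \<and> (\<forall>a. a \<notin> ind \<phi> \<longrightarrow> ob a = {})
     \<and> formula_type \<phi> f
     \<and> fnf \<phi> \<in> f
     \<and> (\<forall>C a. CAss C a \<in> f \<longrightarrow> C \<in> ob a)
     \<and> (\<forall>r a b. RAss r a b \<in> f \<longrightarrow> {cneg C | C. CNot (CEx r C) \<in> ob a} \<subseteq> ob b)"

definition quasimodel ::
  "formula \<Rightarrow> concept set set \<Rightarrow> (iname \<Rightarrow> concept set) \<Rightarrow> formula set \<Rightarrow> bool" where
  "quasimodel \<phi> T ob f \<longleftrightarrow>
     model_candidate \<phi> T ob f
     \<and> (\<forall>c \<in> T. \<forall>r D. CEx r D \<in> c \<longrightarrow>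
          (\<exists>c' \<in> T. {D} \<union> {cneg E | E. CNot (CEx r E) \<in> c} \<subseteq> c'))
     \<and> (\<forall>c \<in> T. \<forall>C. cneg C \<in> c \<longrightarrow> CTop C \<notin> f)
     \<and> (\<forall>C. FNot (CTop C) \<in> f \<longrightarrow> (\<exists>c \<in> T. C \<notin> c))
     \<and> T \<noteq> {}"

definition QM :: "formula \<Rightarrow> (concept set set \<times> (iname \<Rightarrow> concept set) \<times> formula set) set" where
  "QM \<phi> = {(T, ob, f). quasimodel \<phi> T ob f}"

text \<open>A fixed unsatisfiable formula \<open>\<bottom>\<close> (the empty disjunction) and \<open>\<top> = \<not>\<bottom>\<close>.\<close>
definition fbot :: formula where
  "fbot = CTop (CAnd (CName 0) (CNot (CName 0)))"

definition ftop :: formula where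
  "ftop = FNot fbot"

fun bigconj :: "formula list \<Rightarrow> formula" where
  "bigconj [] = ftop"
| "bigconj [\<psi>] = \<psi>"
| "bigconj (\<psi> # \<chi> # xs) = FAnd \<psi> (bigconj (\<chi> # xs))"

fun bigdisj :: "formula list \<Rightarrow> formula" where
  "bigdisj [] = fbot"
| "bigdisj xs = FNot (bigconj (map FNot xs))"

definition enum_set :: "'a set \<Rightarrow> 'a list" where
  "enum_set S = (SOME xs. set xs = S \<and> distinct xs)"

definition literal_conj :: "formula set \<Rightarrow> formula" where
  "literal_conj f = FAnd (bigconj (enum_set {\<alpha> \<in> f. atomic \<alpha>}))
                         (bigconj (map FNot (enum_set {\<alpha>. atomic \<alpha> \<and> FNot \<alpha> \<in> f})))"

definition dagger :: "formula \<Rightarrow> formula" where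
  "dagger \<phi> = bigdisj (map (\<lambda>(T, ob, f). literal_conj f) (enum_set (QM \<phi>)))"

end

theory Submission
  imports Defs
begin

(* A formula type f of \<phi> is a valuation of the subformulae of \<phi> that respects negation
   and conjunction, so it is determined by the atoms it contains: if an interpretation I
   satisfies the literals of f, then f is exactly the set of subformulae true in I, and as
   \<phi> \<in> f, I satisfies \<phi>. Conversely, a model I of \<phi> induces a quasimodel whose concept
   types are those realised by the elements of I and whose formula type is the set of
   subformulae true in I; I satisfies its literals. Since con \<phi> and Sub \<phi> are finite,
   so is QM \<phi>, and \<phi>\<dagger> is a genuine finite disjunction. *)

lemma cext_subset_dom: "wf_interp I \<Longrightarrow> cext I C \<subseteq> dom I"
  by (induction C) (auto simp: wf_interp_def)

lemma cext_cneg: "wf_interp I \<Longrightarrow> cext I (cneg C) = dom I - cext I C"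
  by (cases C) (use cext_subset_dom in auto)

lemma sat_fneg [simp]: "sat I (fneg \<psi>) \<longleftrightarrow> \<not> sat I \<psi>"
  by (cases \<psi>) auto

lemma sat_fnf [simp]: "sat I (fnf \<psi>) \<longleftrightarrow> sat I \<psi>"
  by (induction \<psi>) auto

lemma sat_bigconj: "wf_interp I \<Longrightarrow> sat I (bigconj xs) \<longleftrightarrow> (\<forall>x\<in>set xs. sat I x)"
  by (induction xs rule: bigconj.induct) (auto simp: ftop_def fbot_def wf_interp_def)

lemma sat_bigdisj: "wf_interp I \<Longrightarrow> sat I (bigdisj xs) \<longleftrightarrow> (\<exists>x\<in>set xs. sat I x)"
  by (cases xs) (auto simp: fbot_def wf_interp_def sat_bigconj simp del: bigconj.simps)

lemma set_enum_set: "finite S \<Longrightarrow> set (enum_set S) = S"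
  unfolding enum_set_def by (metis (mono_tags, lifting) finite_distinct_list someI_ex)

lemma sat_literal_conj:
  assumes "wf_interp I" and "finite f"
  shows "sat I (literal_conj f) \<longleftrightarrow>
    (\<forall>\<alpha>\<in>f. atomic \<alpha> \<longrightarrow> sat I \<alpha>) \<and> (\<forall>\<alpha>. atomic \<alpha> \<and> FNot \<alpha> \<in> f \<longrightarrow> \<not> sat I \<alpha>)"
proof -
  have "finite {\<alpha>. atomic \<alpha> \<and> FNot \<alpha> \<in> f}"
    using finite_vimageI[OF \<open>finite f\<close>, of FNot] by (auto intro: finite_subset simp: inj_def)
  with assms show ?thesis
    unfolding literal_conj_def by (auto simp: sat_bigconj set_enum_set)
qed

(* Sub0 (FNot (FNot \<psi>)) = Sub0 \<psi> need not contain FNot (FNot \<psi>), so Sub0 is closed under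
   taking conjuncts only on formulas without double negations; this is why Sub uses fnf. *)
fun no_double_neg :: "formula \<Rightarrow> bool" where
  "no_double_neg (FNot (FNot \<psi>)) = False"
| "no_double_neg (FNot \<psi>) = no_double_neg \<psi>"
| "no_double_neg (FAnd \<psi> \<chi>) = (no_double_neg \<psi> \<and> no_double_neg \<chi>)"
| "no_double_neg _ = True"

lemma no_double_neg_fnf: "no_double_neg (fnf \<psi>)"
proof -
  have "no_double_neg \<psi> \<Longrightarrow> no_double_neg (fneg \<psi>)" for \<psi>
    by (induction \<psi> rule: no_double_neg.induct) auto
  then show ?thesis by (induction \<psi>) auto
qed

lemma self_in_Sub0: "no_double_neg \<psi> \<Longrightarrow> \<psi> \<in> Sub0 \<psi>"
proof (induction \<psi>)
  case (FNot \<psi>)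
  then show ?case by (cases \<psi>) auto
qed auto

lemma Sub0_fneg_closed: "\<psi> \<in> Sub0 \<theta> \<Longrightarrow> fneg \<psi> \<in> Sub0 \<theta>"
  by (induction \<theta>) auto

lemma Sub0_FAnd_closed: "FAnd \<psi> \<chi> \<in> Sub0 \<theta> \<Longrightarrow> no_double_neg \<theta> \<Longrightarrow> \<psi> \<in> Sub0 \<theta> \<and> \<chi> \<in> Sub0 \<theta>"
  by (induction \<theta> rule: no_double_neg.induct) (auto dest: self_in_Sub0)

lemma fnf_in_Sub: "fnf \<phi> \<in> Sub \<phi>"
  unfolding Sub_def by (rule self_in_Sub0[OF no_double_neg_fnf])

lemma fneg_in_Sub: "\<psi> \<in> Sub \<phi> \<Longrightarrow> fneg \<psi> \<in> Sub \<phi>"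
  unfolding Sub_def by (rule Sub0_fneg_closed)

lemma FAnd_in_SubD: "FAnd \<psi> \<chi> \<in> Sub \<phi> \<Longrightarrow> \<psi> \<in> Sub \<phi> \<and> \<chi> \<in> Sub \<phi>"
  unfolding Sub_def using Sub0_FAnd_closed no_double_neg_fnf by blast

lemma finite_Sub: "finite (Sub \<phi>)"
proof -
  have "finite (Sub0 \<theta>)" for \<theta> by (induction \<theta>) auto
  then show ?thesis by (simp add: Sub_def)
qed

lemma finite_formula_type: "formula_type \<phi> f \<Longrightarrow> finite f"
  unfolding formula_type_def using finite_Sub finite_subset by blast

lemma ind_Sub: "\<psi> \<in> Sub \<phi> \<Longrightarrow> ind \<psi> \<subseteq> ind \<phi>"
proof -
  have "ind (fneg \<theta>) = ind \<theta>" for \<theta> by (cases \<theta>) auto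
  then have "ind (fnf \<phi>) = ind \<phi>" by (induction \<phi>) auto
  moreover have "\<psi> \<in> Sub0 \<theta> \<Longrightarrow> ind \<psi> \<subseteq> ind \<theta>" for \<theta> by (induction \<theta>) auto
  ultimately show "\<psi> \<in> Sub \<phi> \<Longrightarrow> ind \<psi> \<subseteq> ind \<phi>" unfolding Sub_def by blast
qed

lemma finite_ind: "finite (ind \<phi>)"
  by (induction \<phi>) auto

fun concepts_of :: "formula \<Rightarrow> concept set" where
  "concepts_of (CAss C a) = {C}"
| "concepts_of (RAss r a b) = {}"
| "concepts_of (CTop C) = {C}"
| "concepts_of (FNot \<psi>) = concepts_of \<psi>"
| "concepts_of (FAnd \<psi> \<chi>) = concepts_of \<psi> \<union> concepts_of \<chi>"

fun subconcepts :: "concept \<Rightarrow> concept set" where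
  "subconcepts (CName A) = {CName A}"
| "subconcepts (CNot C) = insert (CNot C) (subconcepts C)"
| "subconcepts (CAnd C D) = insert (CAnd C D) (subconcepts C \<union> subconcepts D)"
| "subconcepts (CEx r C) = insert (CEx r C) (subconcepts C)"

lemma subconcepts_self: "C \<in> subconcepts C"
  by (cases C) auto

lemma subconcepts_trans: "C \<in> subconcepts D \<Longrightarrow> subconcepts C \<subseteq> subconcepts D"
  by (induction D) auto

definition subconcepts_Sub :: "formula \<Rightarrow> concept set" where
  "subconcepts_Sub \<phi> = (\<Union>\<psi>\<in>Sub \<phi>. \<Union>C\<in>concepts_of \<psi>. subconcepts C)"

lemma finite_subconcepts_Sub: "finite (subconcepts_Sub \<phi>)"
proof -
  have "finite (subconcepts C)" for C by (induction C) auto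
  moreover have "finite (concepts_of \<psi>)" for \<psi> by (induction \<psi>) auto
  ultimately show ?thesis unfolding subconcepts_Sub_def using finite_Sub by blast
qed

lemma subconcepts_Sub_closed:
  "C \<in> subconcepts_Sub \<phi> \<Longrightarrow> subconcepts C \<subseteq> subconcepts_Sub \<phi>"
  unfolding subconcepts_Sub_def using subconcepts_trans by blast

lemma con_subset: "C \<in> con \<phi> \<Longrightarrow> C \<in> subconcepts_Sub \<phi> \<union> CNot ` subconcepts_Sub \<phi>"
proof (induction rule: con.induct)
  case (con_top C)
  then show ?case by (force simp: subconcepts_Sub_def subconcepts_self)
next
  case (con_ass C a)
  then show ?case by (force simp: subconcepts_Sub_def subconcepts_self)
next
  case (con_and1 C D)
  then show ?case using subconcepts_Sub_closed subconcepts_self by fastforce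
next
  case (con_and2 C D)
  then show ?case using subconcepts_Sub_closed subconcepts_self by fastforce
next
  case (con_ex r C)
  then show ?case using subconcepts_Sub_closed subconcepts_self by fastforce
next
  case (con_neg C)
  show ?case using con_neg.IH subconcepts_Sub_closed subconcepts_self by (cases C) fastforce+
qed

lemma finite_con: "finite (con \<phi>)"
  using con_subset finite_subconcepts_Sub by (meson subsetI finite_Un finite_imageI finite_subset)

lemma finite_QM: "finite (QM \<phi>)"
proof -
  let ?OB = "{ob. \<forall>a. (a \<in> ind \<phi> \<longrightarrow> ob a \<in> Pow (con \<phi>)) \<and> (a \<notin> ind \<phi> \<longrightarrow> ob a = {})}"
  have "finite ?OB"
    by (rule finite_set_of_finite_funs) (use finite_ind finite_con in auto)
  moreover have "QM \<phi> \<subseteq> Pow (Pow (con \<phi>)) \<times> ?OB \<times> Pow (Sub \<phi>)"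
    by (auto simp: QM_def quasimodel_def model_candidate_def concept_type_def formula_type_def)
  ultimately show ?thesis
    using finite_con finite_Sub by (meson finite_Pow_iff finite_SigmaI finite_subset)
qed

lemma sat_dagger_iff:
  assumes "wf_interp I"
  shows "sat I (dagger \<phi>) \<longleftrightarrow> (\<exists>T ob f. quasimodel \<phi> T ob f \<and> sat I (literal_conj f))"
  unfolding dagger_def using assms finite_QM[of \<phi>]
  by (auto simp: sat_bigdisj set_enum_set QM_def)

definition concept_type_of :: "'d interp \<Rightarrow> formula \<Rightarrow> 'd \<Rightarrow> concept set" where
  "concept_type_of I \<phi> d = {C \<in> con \<phi>. d \<in> cext I C}"

definition individual_type_of :: "'d interp \<Rightarrow> formula \<Rightarrow> iname \<Rightarrow> concept set" where
  "individual_type_of I \<phi> a = (if a \<in> ind \<phi> then concept_type_of I \<phi> (iint I a) else {})"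

definition formula_type_of :: "'d interp \<Rightarrow> formula \<Rightarrow> formula set" where
  "formula_type_of I \<phi> = {\<psi> \<in> Sub \<phi>. sat I \<psi>}"

lemma formula_type_formula_type_of: "formula_type \<phi> (formula_type_of I \<phi>)"
  unfolding formula_type_def formula_type_of_def
proof (intro conjI ballI allI impI)
  fix \<psi> assume "\<psi> \<in> Sub \<phi>"
  moreover from this have "fneg \<psi> \<in> Sub \<phi>" by (rule fneg_in_Sub)
  ultimately show "\<psi> \<in> {\<psi> \<in> Sub \<phi>. sat I \<psi>} \<longleftrightarrow> fneg \<psi> \<notin> {\<psi> \<in> Sub \<phi>. sat I \<psi>}"
    by simp
next
  fix \<psi> \<chi> assume "FAnd \<psi> \<chi> \<in> Sub \<phi>"
  moreover from this have "\<psi> \<in> Sub \<phi>" "\<chi> \<in> Sub \<phi>" by (blast dest: FAnd_in_SubD)+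
  ultimately show "FAnd \<psi> \<chi> \<in> {\<psi> \<in> Sub \<phi>. sat I \<psi>} \<longleftrightarrow>
      \<psi> \<in> {\<psi> \<in> Sub \<phi>. sat I \<psi>} \<and> \<chi> \<in> {\<psi> \<in> Sub \<phi>. sat I \<psi>}"
    by simp
qed auto

lemma formula_type_eq_formula_type_of:
  assumes ft: "formula_type \<phi> f"
    and pos: "\<forall>\<alpha>\<in>f. atomic \<alpha> \<longrightarrow> sat I \<alpha>"
    and neg: "\<forall>\<alpha>. atomic \<alpha> \<and> FNot \<alpha> \<in> f \<longrightarrow> \<not> sat I \<alpha>"
  shows "f = formula_type_of I \<phi>"
proof -
  have sub: "f \<subseteq> Sub \<phi>"
    and fneg_iff: "\<psi> \<in> Sub \<phi> \<Longrightarrow> \<psi> \<in> f \<longleftrightarrow> fneg \<psi> \<notin> f"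
    and FAnd_iff: "FAnd \<psi> \<chi> \<in> Sub \<phi> \<Longrightarrow> FAnd \<psi> \<chi> \<in> f \<longleftrightarrow> \<psi> \<in> f \<and> \<chi> \<in> f" for \<psi> \<chi>
    using ft unfolding formula_type_def by blast+
  have atom: "\<alpha> \<in> Sub \<phi> \<Longrightarrow> atomic \<alpha> \<Longrightarrow> \<alpha> \<in> f \<longleftrightarrow> sat I \<alpha>" for \<alpha>
    using fneg_iff[of \<alpha>] pos neg[rule_format, of \<alpha>] by (cases \<alpha>) auto
  have "\<psi> \<in> Sub \<phi> \<Longrightarrow> \<psi> \<in> f \<longleftrightarrow> sat I \<psi>" for \<psi>
  proof (induction \<psi>)
    case (FNot \<psi>)
    then have "\<psi> \<in> Sub \<phi>" using fneg_in_Sub by fastforce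
    then show ?case using FNot fneg_iff[of "FNot \<psi>"] by simp
  next
    case (FAnd \<psi> \<chi>)
    then have "\<psi> \<in> Sub \<phi>" "\<chi> \<in> Sub \<phi>" using FAnd_in_SubD by blast+
    then show ?case using FAnd FAnd_iff[of \<psi> \<chi>] by simp
  qed (simp_all add: atom)
  then show ?thesis using sub unfolding formula_type_of_def by blast
qed

lemma sat_literal_conj_iff:
  assumes "wf_interp I" and "formula_type \<phi> f"
  shows "sat I (literal_conj f) \<longleftrightarrow> f = formula_type_of I \<phi>"
proof -
  have "sat I (literal_conj f) \<longleftrightarrow>
      (\<forall>\<alpha>\<in>f. atomic \<alpha> \<longrightarrow> sat I \<alpha>) \<and> (\<forall>\<alpha>. atomic \<alpha> \<and> FNot \<alpha> \<in> f \<longrightarrow> \<not> sat I \<alpha>)"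
    using assms by (simp add: sat_literal_conj finite_formula_type)
  then show ?thesis
    using formula_type_eq_formula_type_of[OF assms(2)] by (auto simp: formula_type_of_def)
qed

lemma concept_type_concept_type_of:
  assumes "wf_interp I" and "d \<in> dom I"
  shows "concept_type \<phi> (concept_type_of I \<phi> d)"
  unfolding concept_type_def
proof (intro conjI allI impI ballI)
  show "concept_type_of I \<phi> d \<subseteq> con \<phi>" by (auto simp: concept_type_of_def)
next
  fix D assume "D \<in> con \<phi>"
  moreover from this have "cneg D \<in> con \<phi>" by (rule con_neg)
  ultimately show "D \<in> concept_type_of I \<phi> d \<longleftrightarrow> cneg D \<notin> concept_type_of I \<phi> d"
    using assms(2) by (simp add: concept_type_of_def cext_cneg[OF assms(1)])
next
  fix D E assume "CAnd D E \<in> con \<phi>"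
  moreover from this have "D \<in> con \<phi>" "E \<in> con \<phi>" by (rule con_and1, rule con_and2)
  ultimately show "CAnd D E \<in> concept_type_of I \<phi> d \<longleftrightarrow>
      D \<in> concept_type_of I \<phi> d \<and> E \<in> concept_type_of I \<phi> d"
    by (simp add: concept_type_of_def)
qed

lemma cneg_in_con_if_CNot_CEx: "CNot (CEx r C) \<in> con \<phi> \<Longrightarrow> cneg C \<in> con \<phi>"
  using con_neg[of "CNot (CEx r C)"] by (auto dest: con_ex con_neg)

lemma concept_type_of_successor:
  assumes wf: "wf_interp I" and "CNot (CEx r C) \<in> concept_type_of I \<phi> d" and "(d, e) \<in> rint I r"
  shows "cneg C \<in> concept_type_of I \<phi> e"
proof -
  have "CNot (CEx r C) \<in> con \<phi>" and "d \<notin> cext I (CEx r C)"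
    using assms(2) by (auto simp: concept_type_of_def)
  moreover have "d \<in> dom I" "e \<in> dom I" using wf assms(3) by (auto simp: wf_interp_def)
  ultimately show ?thesis
    using assms(3) cneg_in_con_if_CNot_CEx
    by (auto simp: concept_type_of_def cext_cneg[OF wf])
qed

lemma quasimodel_formula_type: "quasimodel \<phi> T ob f \<Longrightarrow> formula_type \<phi> f"
  by (simp add: quasimodel_def model_candidate_def)

lemma model_candidate_of_model:
  assumes wf: "wf_interp I" and "sat I \<phi>"
  shows "model_candidate \<phi> (concept_type_of I \<phi> ` dom I) (individual_type_of I \<phi>)
    (formula_type_of I \<phi>)"
  unfolding model_candidate_def
proof (intro conjI allI impI)
  show "\<forall>c \<in> concept_type_of I \<phi> ` dom I. concept_type \<phi> c"
    using concept_type_concept_type_of[OF wf] by blast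
  show "\<forall>a \<in> ind \<phi>. individual_type_of I \<phi> a \<in> concept_type_of I \<phi> ` dom I"
    using wf by (auto simp: individual_type_of_def wf_interp_def)
  show "formula_type \<phi> (formula_type_of I \<phi>)" by (rule formula_type_formula_type_of)
  show "fnf \<phi> \<in> formula_type_of I \<phi>"
    using fnf_in_Sub \<open>sat I \<phi>\<close> by (simp add: formula_type_of_def)
next
  fix a assume "a \<notin> ind \<phi>"
  then show "individual_type_of I \<phi> a = {}" by (simp add: individual_type_of_def)
next
  fix C a assume "CAss C a \<in> formula_type_of I \<phi>"
  then have "CAss C a \<in> Sub \<phi>" and "iint I a \<in> cext I C"
    by (auto simp: formula_type_of_def)
  moreover from this have "a \<in> ind \<phi>" using ind_Sub by fastforce
  ultimately show "C \<in> individual_type_of I \<phi> a"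
    by (simp add: individual_type_of_def concept_type_of_def con_ass)
next
  fix r a b assume "RAss r a b \<in> formula_type_of I \<phi>"
  then have "a \<in> ind \<phi>" "b \<in> ind \<phi>" and "(iint I a, iint I b) \<in> rint I r"
    using ind_Sub[of "RAss r a b" \<phi>] by (auto simp: formula_type_of_def)
  then show "{cneg C | C. CNot (CEx r C) \<in> individual_type_of I \<phi> a} \<subseteq> individual_type_of I \<phi> b"
    using concept_type_of_successor[OF wf] by (auto simp: individual_type_of_def)
qed

lemma quasimodel_of_model:
  assumes wf: "wf_interp I" and "sat I \<phi>"
  shows "quasimodel \<phi> (concept_type_of I \<phi> ` dom I) (individual_type_of I \<phi>)
    (formula_type_of I \<phi>)"
  unfolding quasimodel_def
proof (intro conjI ballI allI impI)
  show "model_candidate \<phi> (concept_type_of I \<phi> ` dom I) (individual_type_of I \<phi>)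
      (formula_type_of I \<phi>)"
    using assms by (rule model_candidate_of_model)
next
  fix c r D assume "c \<in> concept_type_of I \<phi> ` dom I" and "CEx r D \<in> c"
  then obtain d where "d \<in> dom I" and c: "c = concept_type_of I \<phi> d"
    and "CEx r D \<in> con \<phi>" and "d \<in> cext I (CEx r D)"
    by (auto simp: concept_type_of_def)
  then obtain e where e: "(d, e) \<in> rint I r" "e \<in> cext I D" and "D \<in> con \<phi>"
    using con_ex by auto
  have "e \<in> dom I" using wf e(1) by (auto simp: wf_interp_def)
  moreover have "{D} \<union> {cneg E | E. CNot (CEx r E) \<in> c} \<subseteq> concept_type_of I \<phi> e"
    using e \<open>D \<in> con \<phi>\<close> concept_type_of_successor[OF wf _ e(1)]
    by (auto simp: c concept_type_of_def)
  ultimately show "\<exists>c' \<in> concept_type_of I \<phi> ` dom I.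
      {D} \<union> {cneg E | E. CNot (CEx r E) \<in> c} \<subseteq> c'"
    by blast
next
  fix c C assume "c \<in> concept_type_of I \<phi> ` dom I" and "cneg C \<in> c"
  then show "CTop C \<notin> formula_type_of I \<phi>"
    by (auto simp: concept_type_of_def formula_type_of_def cext_cneg[OF wf])
next
  fix C assume "FNot (CTop C) \<in> formula_type_of I \<phi>"
  then obtain d where "d \<in> dom I" "d \<notin> cext I C"
    using cext_subset_dom[OF wf] by (auto simp: formula_type_of_def)
  then show "\<exists>c \<in> concept_type_of I \<phi> ` dom I. C \<notin> c"
    by (auto simp: concept_type_of_def)
next
  show "concept_type_of I \<phi> ` dom I \<noteq> {}" using wf by (simp add: wf_interp_def)
qed

theorem mainTheorem3:
  fixes \<phi> :: formula and I :: "'d interp"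
  assumes "wf_interp I"
  shows "sat I \<phi> \<longleftrightarrow> sat I (dagger \<phi>)"
proof -
  have "sat I (dagger \<phi>) \<longleftrightarrow> (\<exists>T ob. quasimodel \<phi> T ob (formula_type_of I \<phi>))"
    using sat_dagger_iff[OF assms] sat_literal_conj_iff[OF assms] quasimodel_formula_type
    by metis
  also have "\<dots> \<longleftrightarrow> sat I \<phi>"
  proof
    assume "\<exists>T ob. quasimodel \<phi> T ob (formula_type_of I \<phi>)"
    then have "fnf \<phi> \<in> formula_type_of I \<phi>" by (auto simp: quasimodel_def model_candidate_def)
    then show "sat I \<phi>" by (simp add: formula_type_of_def)
  next
    assume "sat I \<phi>"
    then show "\<exists>T ob. quasimodel \<phi> T ob (formula_type_of I \<phi>)"
      using quasimodel_of_model[OF assms] by blast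
  qed
  finally show ?thesis by simp
qed

end
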